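(* Assume $T_B\colon\mathcal D(T_B)\to Y_B$ is bijective, and let $P_n\colon X\to X(n)$ be the projection associated to the decomposition $X=X(n)\oplus Z(n)$ (so $\ker P_n=Z(n)$). Then for each $n\in\mathbb Z$ the operator $A_n|_{\ker P_n}\colon\ker P_n\to\ker P_{n+1}$ is invertible (bijective).
   Context: $B$ is an admissible Banach sequence space: a complete normed space $B$ of real sequences $(s_n)_{n\in\mathbb Z}$ such that $\mathbf{s}'\in B$, $|s_n|\le|s'_n|$ for all $n$ imply $\mathbf{s}\in B$, $\|\mathbf{s}\|_B\le\|\mathbf{s}'\|_B$; $\chi_{\{n\}}\in B$ with $\|\chi_{\{n\}}\|_B>0$ for all $n$; and shifts $(s_{n+m})_n$ of elements of $B$ are in $B$ with norm at most $N\|\mathbf{s}\|_B$ for a fixed $N>0$. $X$ is a Banach space with norms $\|\cdot\|_n$ ($n\in\mathbb Z$) each equivalent to its norm; $(A_m)_{m\in\mathbb Z}$ are bounded linear operators on $X$. $Y_B$ is the Banach space of sequences $\mathbf{x}=(x_n)_{n\in\mathbb Z}$ in $X$ with $(\|x_n\|_n)_n\in B$, normed by $\|(\|x_n\|_n)_n\|_B$; $(T_B\mathbf{x})_n=x_n-A_{n-1}x_{n-1}$ on $\mathcal D(T_B)=\{\mathbf{x}\in Y_B:T_B\mathbf{x}\in Y_B\}$. For $n\in\mathbb Z$, $X(n)$ is the set of $x\in X$ for which there is $\mathbf{x}=(x_m)_m\in Y_B$ with $x_n=x$ and $x_m=A_{m-1}x_{m-1}$ for all $m>n$; $Z(n)$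 is the set of $x\in X$ for which there is $\mathbf{z}=(z_m)_m\in Y_B$ with $z_n=x$ and $z_m=A_{m-1}z_{m-1}$ for all $m\le n$. When $T_B$ is bijective, $X=X(n)\oplus Z(n)$ for every $n$. *)

theory Defs
  imports "HOL-Analysis.Analysis"
begin

definition seq_normed_space :: "(int \<Rightarrow> real) set \<Rightarrow> ((int \<Rightarrow> real) \<Rightarrow> real) \<Rightarrow> bool" where
  "seq_normed_space B nB \<longleftrightarrow>
     (\<lambda>n. 0) \<in> B \<and>
     (\<forall>s\<in>B. \<forall>t\<in>B. (\<lambda>n. s n + t n) \<in> B) \<and>
     (\<forall>s\<in>B. \<forall>c::real. (\<lambda>n. c * s n) \<in> B) \<and>
     (\<forall>s\<in>B. nB s \<ge> 0) \<and>
     (\<forall>s\<in>B. nB s = 0 \<longleftrightarrow> s = (\<lambda>n. 0)) \<and>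
     (\<forall>s\<in>B. \<forall>c::real. nB (\<lambda>n. c * s n) = \<bar>c\<bar> * nB s) \<and>
     (\<forall>s\<in>B. \<forall>t\<in>B. nB (\<lambda>n. s n + t n) \<le> nB s + nB t)"

definition seq_space_complete :: "(int \<Rightarrow> real) set \<Rightarrow> ((int \<Rightarrow> real) \<Rightarrow> real) \<Rightarrow> bool" where
  "seq_space_complete B nB \<longleftrightarrow>
     (\<forall>f :: nat \<Rightarrow> int \<Rightarrow> real. (\<forall>k. f k \<in> B) \<longrightarrow>
        (\<forall>e>0. \<exists>M. \<forall>k\<ge>M. \<forall>l\<ge>M. nB (\<lambda>n. f k n - f l n) < e) \<longrightarrow>
        (\<exists>s\<in>B. (\<lambda>k. nB (\<lambda>n. f k n - s n)) \<longlonglongrightarrow> 0))"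

definition admissible :: "(int \<Rightarrow> real) set \<Rightarrow> ((int \<Rightarrow> real) \<Rightarrow> real) \<Rightarrow> real \<Rightarrow> bool" where
  "admissible B nB N \<longleftrightarrow>
     seq_normed_space B nB \<and> seq_space_complete B nB \<and>
     (\<forall>s s'. s' \<in> B \<longrightarrow> (\<forall>n. \<bar>s n\<bar> \<le> \<bar>s' n\<bar>) \<longrightarrow> s \<in> B \<and> nB s \<le> nB s') \<and>
     (\<forall>n. (\<lambda>k. if k = n then 1 else 0) \<in> B \<and> nB (\<lambda>k. if k = n then 1 else 0) > 0) \<and>
     N > 0 \<and>
     (\<forall>s\<in>B. \<forall>m. (\<lambda>n. s (n + m)) \<in> B \<and> nB (\<lambda>n. s (n + m)) \<le> N * nB s)"

definition equiv_norm :: "('a::real_normed_vector \<Rightarrow> real) \<Rightarrow> bool" where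
  "equiv_norm p \<longleftrightarrow>
     (\<forall>x. p x \<ge> 0) \<and> (\<forall>x. p x = 0 \<longleftrightarrow> x = 0) \<and>
     (\<forall>c x. p (scaleR c x) = \<bar>c\<bar> * p x) \<and>
     (\<forall>x y. p (x + y) \<le> p x + p y) \<and>
     (\<exists>c C. c > 0 \<and> C > 0 \<and> (\<forall>x. c * norm x \<le> p x \<and> p x \<le> C * norm x))"

definition YB :: "(int \<Rightarrow> real) set \<Rightarrow> (int \<Rightarrow> 'a \<Rightarrow> real) \<Rightarrow> (int \<Rightarrow> 'a) set" where
  "YB B nrm = {x. (\<lambda>n. nrm n (x n)) \<in> B}"

definition TB :: "(int \<Rightarrow> 'a \<Rightarrow> 'a::real_vector) \<Rightarrow> (int \<Rightarrow> 'a) \<Rightarrow> (int \<Rightarrow> 'a)" where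
  "TB A x = (\<lambda>n. x n - A (n - 1) (x (n - 1)))"

definition dom_TB :: "(int \<Rightarrow> real) set \<Rightarrow> (int \<Rightarrow> 'a \<Rightarrow> real) \<Rightarrow> (int \<Rightarrow> 'a \<Rightarrow> 'a::real_vector) \<Rightarrow> (int \<Rightarrow> 'a) set" where
  "dom_TB B nrm A = {x \<in> YB B nrm. TB A x \<in> YB B nrm}"

definition Xsp :: "(int \<Rightarrow> real) set \<Rightarrow> (int \<Rightarrow> 'a \<Rightarrow> real) \<Rightarrow> (int \<Rightarrow> 'a \<Rightarrow> 'a) \<Rightarrow> int \<Rightarrow> 'a set" where
  "Xsp B nrm A n = {v. \<exists>x \<in> YB B nrm. x n = v \<and> (\<forall>m>n. x m = A (m - 1) (x (m - 1)))}"

definition Zsp :: "(int \<Rightarrow> real) set \<Rightarrow> (int \<Rightarrow> 'a \<Rightarrow> real) \<Rightarrow> (int \<Rightarrow> 'a \<Rightarrow> 'a) \<Rightarrow> int \<Rightarrow> 'a set" where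
  "Zsp B nrm A n = {v. \<exists>z \<in> YB B nrm. z n = v \<and> (\<forall>m\<le>n. z m = A (m - 1) (z (m - 1)))}"

end

theory Submission
  imports Defs
begin

text \<open>A backward orbit of A ending at v in Z(n) stays in Y_B when it is extended by A_n v
  (only one coordinate changes), and a backward orbit ending at time n + 1 passes through Z(n) at
  time n; so A_n maps Z(n) onto Z(n + 1). If A_n v = 0, the orbit of v truncated after time n
  lies in the kernel of T_B and therefore vanishes, so v = 0. As Z(n) = ker P_n is a linear
  subspace, this trivial kernel gives injectivity.\<close>

lemma YB_fun_upd:
  assumes "admissible B nB N" and "z \<in> YB B nrm"
  shows "z(k := v) \<in> YB B nrm"
proof -
  have sns: "seq_normed_space B nB" and chi: "(\<lambda>j. if j = k then 1 else 0) \<in> B"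
    using assms(1) unfolding admissible_def by blast+
  have add: "s \<in> B \<Longrightarrow> t \<in> B \<Longrightarrow> (\<lambda>n. s n + t n) \<in> B"
    and scale: "s \<in> B \<Longrightarrow> (\<lambda>n. c * s n) \<in> B" for s t c
    using sns unfolding seq_normed_space_def by blast+
  define c where "c = nrm k v - nrm k (z k)"
  have "(\<lambda>m. nrm m (z m)) \<in> B"
    using assms(2) unfolding YB_def by simp
  then have "(\<lambda>m. nrm m (z m) + c * (if m = k then 1 else 0)) \<in> B"
    using add scale[OF chi] by blast
  moreover have "(\<lambda>m. nrm m ((z(k := v)) m)) = (\<lambda>m. nrm m (z m) + c * (if m = k then 1 else 0))"
    by (auto simp: c_def)
  ultimately show ?thesis
    unfolding YB_def by simp
qed

lemma zero_in_YB:
  assumes "admissible B nB N" and "\<And>m. equiv_norm (nrm m)"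
  shows "(\<lambda>_. 0) \<in> YB B nrm"
proof -
  have "seq_normed_space B nB"
    using assms(1) unfolding admissible_def by blast
  then have "(\<lambda>_. 0) \<in> B"
    unfolding seq_normed_space_def by blast
  moreover have "nrm m 0 = 0" for m
    using assms(2) unfolding equiv_norm_def by blast
  ultimately show ?thesis
    unfolding YB_def by simp
qed

lemma YB_truncate:
  assumes "admissible B nB N" and "\<And>m. equiv_norm (nrm m)" and "z \<in> YB B nrm"
  shows "(\<lambda>m. if m \<le> n then z m else 0) \<in> YB B nrm"
proof -
  have mono: "s' \<in> B \<Longrightarrow> \<forall>n. \<bar>s n\<bar> \<le> \<bar>s' n\<bar> \<Longrightarrow> s \<in> B" for s s'
    using assms(1) unfolding admissible_def by blast
  have "nrm m 0 = 0" "nrm m x \<ge> 0" for m x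
    using assms(2) unfolding equiv_norm_def by blast+
  then have "\<forall>m. \<bar>nrm m (if m \<le> n then z m else 0)\<bar> \<le> \<bar>nrm m (z m)\<bar>"
    by simp
  then show ?thesis
    using mono[of "\<lambda>m. nrm m (z m)" "\<lambda>m. nrm m (if m \<le> n then z m else 0)"] assms(3)
    unfolding YB_def by simp
qed

lemma image_Zsp:
  assumes "admissible B nB N"
  shows "A n ` Zsp B nrm A n = Zsp B nrm A (n + 1)"
proof
  show "A n ` Zsp B nrm A n \<subseteq> Zsp B nrm A (n + 1)"
  proof
    fix w assume "w \<in> A n ` Zsp B nrm A n"
    then obtain v where "v \<in> Zsp B nrm A n" and w: "w = A n v"
      by blast
    then obtain z where z: "z \<in> YB B nrm" "z n = v"
      and orbit: "\<forall>m\<le>n. z m = A (m - 1) (z (m - 1))"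
      unfolding Zsp_def by blast
    define z' where "z' = z(n + 1 := w)"
    have "z' \<in> YB B nrm"
      unfolding z'_def using YB_fun_upd[OF assms z(1)] .
    moreover have "z' m = A (m - 1) (z' (m - 1))" if m: "m \<le> n + 1" for m
    proof -
      consider "m = n + 1" | "m \<le> n"
        using m by linarith
      then show ?thesis
        using orbit[rule_format, of m] z(2) w by cases (simp_all add: z'_def)
    qed
    moreover have "z' (n + 1) = w"
      by (simp add: z'_def)
    ultimately show "w \<in> Zsp B nrm A (n + 1)"
      unfolding Zsp_def by blast
  qed
next
  show "Zsp B nrm A (n + 1) \<subseteq> A n ` Zsp B nrm A n"
  proof
    fix w assume "w \<in> Zsp B nrm A (n + 1)"
    then obtain z where z: "z \<in> YB B nrm" "z (n + 1) = w"
      and orbit: "\<forall>m\<le>n + 1. z m = A (m - 1) (z (m - 1))"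
      unfolding Zsp_def by blast
    have "\<forall>m\<le>n. z m = A (m - 1) (z (m - 1))"
      using orbit by (meson add_increasing2 order_trans zero_le_one order_refl)
    then have "z n \<in> Zsp B nrm A n"
      using z(1) unfolding Zsp_def by blast
    moreover have "w = A n (z n)"
      using orbit[rule_format, of "n + 1"] z(2) by simp
    ultimately show "w \<in> A n ` Zsp B nrm A n"
      by blast
  qed
qed

lemma Zsp_eq_0_if_A_eq_0:
  assumes adm: "admissible B nB N" and norms: "\<And>m. equiv_norm (nrm m)"
    and lin: "\<And>m. linear (A m)" and inj: "inj_on (TB A) (dom_TB B nrm A)"
    and v: "v \<in> Zsp B nrm A n" and Av: "A n v = 0"
  shows "v = 0"
proof -
  obtain z where z: "z \<in> YB B nrm" "z n = v" and orbit: "\<forall>m\<le>n. z m = A (m - 1) (z (m - 1))"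
    using v unfolding Zsp_def by blast
  define z' where "z' = (\<lambda>m. if m \<le> n then z m else 0)"
  have A0: "A m 0 = 0" for m
    using lin by (simp add: linear_0)
  have T0: "TB A (\<lambda>_. 0) = (\<lambda>_. 0)"
    by (simp add: TB_def A0)
  then have zero_dom: "(\<lambda>_. 0) \<in> dom_TB B nrm A"
    using zero_in_YB[OF adm norms] unfolding dom_TB_def by simp
  have Tz': "TB A z' = (\<lambda>_. 0)"
  proof
    fix m
    consider "m \<le> n" | "m = n + 1" | "m > n + 1"
      by linarith
    then show "TB A z' m = 0"
      using orbit[rule_format, of m] z(2) Av by cases (auto simp: TB_def z'_def A0)
  qed
  moreover have "z' \<in> YB B nrm"
    unfolding z'_def using YB_truncate[OF adm norms z(1)] .
  ultimately have "z' \<in> dom_TB B nrm A"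
    using zero_dom unfolding dom_TB_def by simp
  then have "z' = (\<lambda>_. 0)"
    using inj_onD[OF inj _ _ zero_dom] Tz' T0 by simp
  then have "z' n = 0"
    by simp
  then show "v = 0"
    using z(2) by (simp add: z'_def)
qed

theorem lemma3p7:
  fixes B :: "(int \<Rightarrow> real) set" and nB :: "(int \<Rightarrow> real) \<Rightarrow> real" and N :: real
    and nrm :: "int \<Rightarrow> 'a::banach \<Rightarrow> real"
    and A :: "int \<Rightarrow> 'a \<Rightarrow> 'a"
    and P :: "int \<Rightarrow> 'a \<Rightarrow> 'a"
  assumes adm: "admissible B nB N"
    and norms: "\<And>n. equiv_norm (nrm n)"
    and bl: "\<And>m. bounded_linear (A m)"
    and bij: "bij_betw (TB A) (dom_TB B nrm A) (YB B nrm)"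
    and P_lin: "\<And>n. linear (P n)"
    and P_idem: "\<And>n x. P n (P n x) = P n x"
    and P_range: "\<And>n. range (P n) = Xsp B nrm A n"
    and P_ker: "\<And>n. {x. P n x = 0} = Zsp B nrm A n"
  shows "\<forall>n. bij_betw (A n) {x. P n x = 0} {x. P (n + 1) x = 0}"
proof
  \<comment> \<open>Only the description of the kernels of P is needed.\<close>
  fix n
  have lin: "linear (A m)" for m
    using bl bounded_linear.linear by blast
  have "\<forall>x\<in>{x. P n x = 0}. A n x = 0 \<longrightarrow> x = 0"
    using Zsp_eq_0_if_A_eq_0[OF adm norms lin bij_betw_imp_inj_on[OF bij]] by (simp add: P_ker)
  then have "inj_on (A n) (Zsp B nrm A n)"
    unfolding P_ker[symmetric] linear_inj_on_iff_eq_0[OF lin linear_subspace_kernel[OF P_lin]] .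
  then show "bij_betw (A n) {x. P n x = 0} {x. P (n + 1) x = 0}"
    unfolding P_ker bij_betw_def using image_Zsp[OF adm] by simp
qed

end
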